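(* Assume $\ker(K)\cap\ker(D)=\{0\}$. Fix $\delta\ge0$ and a vector of observations $y^\delta=Kx^{GT}+e$ with $\|e\|_2\le\delta$. Let $\{\Psi_k\}_{k\in\mathbb{N}}$ be a sequence of reconstructors such that one of the following holds: 1. $\|\Psi_k(y^\delta)-x^{GT}\|_1\to0$ as $k\to\infty$; 2. $\|\,|D\Psi_k(y^\delta)|-|Dx^{GT}|\,\|_1\to0$ as $k\to\infty$. For each $k$ let $x^*_{\Psi_k,\delta}$ be the unique minimizer over $\mathcal{X}$ of $\mathcal{J}_{\Psi_k,\delta}(x)=\|Kx-y^\delta\|_2^2+\lambda\|w(\Psi_k(y^\delta))\odot|Dx|\|_1$, and let $x^*_{GT,\delta}$ denote the unique minimizer over $\mathcal{X}$ of $\mathcal{J}_{GT,\delta}(x)=\|Kx-y^\delta\|_2^2+\lambda\|w(x^{GT})\odot|Dx|\|_1$. Then $\{x^*_{\Psi_k,\delta}\}_{k\in\mathbb{N}}$ has a convergent subsequence whose limit is $x^*_{GT,\delta}$.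
   Context: Let $K\in\mathbb{R}^{m\times n}$ with $m\le n$, and let $D_h,D_v\in\mathbb{R}^{n\times n}$ be the discrete horizontal and vertical difference operators; $Dx=\begin{bmatrix}D_hx\\ D_vx\end{bmatrix}\in\mathbb{R}^{2n}$, and $|Dx|\in\mathbb{R}^n$, $(|Dx|)_i=\sqrt{(D_hx)_i^2+(D_vx)_i^2}$. $\mathcal{X}=\{x\in\mathbb{R}^n: x_i\ge 0\ \forall i\}$ and $x^{GT}\in\mathcal{X}$ is the ground truth. Fix $\lambda>0$, $\eta>0$, $p\in(0,1)$, and for $\tilde x\in\mathbb{R}^n$ define $(w(\tilde{x}))_i=\big(\eta/\sqrt{\eta^2+(|D\tilde{x}|)_i^2}\big)^{1-p}$. A reconstructor is a Lipschitz continuous map $\Psi:\mathbb{R}^m\to\mathbb{R}^n$. $\odot$ is the entrywise product. *)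

theory Defs
  imports "HOL-Analysis.Analysis"
begin

text \<open>Vectors in R^n are real^'n, K is an m x n matrix (real^'n^'m).
  Dh, Dv are the (linear) difference operators, given as n x n matrices.\<close>

definition nonneg_orthant :: "(real^'n) set" where
  "nonneg_orthant = {x. \<forall>i. x $ i \<ge> 0}"

definition absD :: "real^'n^'n \<Rightarrow> real^'n^'n \<Rightarrow> real^'n \<Rightarrow> real^'n" where
  "absD Dh Dv x = (\<chi> i. sqrt (((Dh *v x) $ i)\<^sup>2 + ((Dv *v x) $ i)\<^sup>2))"

definition weight :: "real^'n^'n \<Rightarrow> real^'n^'n \<Rightarrow> real \<Rightarrow> real \<Rightarrow> real^'n \<Rightarrow> real^'n" where
  "weight Dh Dv \<eta> p xt = (\<chi> i. (\<eta> / sqrt (\<eta>\<^sup>2 + ((absD Dh Dv xt) $ i)\<^sup>2)) powr (1 - p))"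

definition norm1 :: "real^'n \<Rightarrow> real" where
  "norm1 x = (\<Sum>i\<in>UNIV. \<bar>x $ i\<bar>)"

definition Jfun :: "real^'n^'m \<Rightarrow> real^'n^'n \<Rightarrow> real^'n^'n \<Rightarrow> real \<Rightarrow> real \<Rightarrow> real
    \<Rightarrow> real^'m \<Rightarrow> real^'n \<Rightarrow> real^'n \<Rightarrow> real" where
  "Jfun K Dh Dv lam \<eta> p y xt x =
     (norm (K *v x - y))\<^sup>2
     + lam * norm1 (\<chi> i. (weight Dh Dv \<eta> p xt) $ i * (absD Dh Dv x) $ i)"

definition is_unique_minimizer :: "('a \<Rightarrow> real) \<Rightarrow> 'a set \<Rightarrow> 'a \<Rightarrow> bool" where
  "is_unique_minimizer J S x \<longleftrightarrow> x \<in> S \<and> (\<forall>z\<in>S. J x \<le> J z) \<and>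
     (\<forall>x'\<in>S. (\<forall>z\<in>S. J x' \<le> J z) \<longrightarrow> x' = x)"

end

theory Submission
  imports Defs
begin

text \<open>The weights depend continuously on the reconstruction and are bounded away
  from zero near the limit weights, so the energies are uniformly coercive under
  \<open>ker K \<inter> ker D = {0}\<close> and the minimizers form an eventually bounded, hence
  relatively compact, sequence. Along a convergent subsequence the energies converge
  jointly in the weights and the argument, so the limit minimizes the ground-truth
  energy; by uniqueness it is \<open>x*_{GT,\<delta>}\<close>.\<close>

definition weighted_energy :: "real^'n^'m \<Rightarrow> real^'n^'n \<Rightarrow> real^'n^'n \<Rightarrow> real
    \<Rightarrow> real^'m \<Rightarrow> real^'n \<Rightarrow> real^'n \<Rightarrow> real" where
  "weighted_energy K Dh Dv lam y W x =
     (norm (K *v x - y))\<^sup>2 + lam * norm1 (\<chi> i. W $ i * absD Dh Dv x $ i)"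

lemma Jfun_eq_weighted_energy:
  "Jfun K Dh Dv lam \<eta> p y xt = weighted_energy K Dh Dv lam y (weight Dh Dv \<eta> p xt)"
  unfolding Jfun_def weighted_energy_def by (simp add: fun_eq_iff)

lemma is_unique_minimizerD:
  assumes "is_unique_minimizer J S x"
  shows "x \<in> S" "\<And>z. z \<in> S \<Longrightarrow> J x \<le> J z"
    and "\<And>x'. x' \<in> S \<Longrightarrow> \<forall>z\<in>S. J x' \<le> J z \<Longrightarrow> x' = x"
  using assms unfolding is_unique_minimizer_def by blast+

lemma closed_nonneg_orthant: "closed nonneg_orthant"
  unfolding nonneg_orthant_def
  by (intro closed_Collect_all) (rule closed_halfspace_component_ge_cart)

lemma zero_in_nonneg_orthant: "0 \<in> nonneg_orthant"
  unfolding nonneg_orthant_def by simp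

lemma absD_nonneg: "0 \<le> absD Dh Dv x $ i"
  unfolding absD_def by simp

lemma absD_zero [simp]: "absD Dh Dv 0 = 0"
  unfolding absD_def by (simp add: vec_eq_iff)

lemma norm_le_sum_absD:
  "norm (Dh *v x) \<le> (\<Sum>i\<in>UNIV. absD Dh Dv x $ i)"
  "norm (Dv *v x) \<le> (\<Sum>i\<in>UNIV. absD Dh Dv x $ i)"
  unfolding absD_def
  by (auto intro!: order_trans[OF norm_le_l1_cart] sum_mono real_sqrt_ge_abs1 real_sqrt_ge_abs2)

lemma weight_pos: "\<eta> > 0 \<Longrightarrow> 0 < weight Dh Dv \<eta> p x $ i"
  unfolding weight_def by (simp add: add_pos_nonneg)

lemma norm_le_norm1: "norm x \<le> norm1 x"
  unfolding norm1_def by (rule norm_le_l1_cart)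

lemma norm1_diff_tendsto_0_imp_tendsto:
  assumes "((\<lambda>k. norm1 (f k - a)) \<longlongrightarrow> 0) F"
  shows "(f \<longlongrightarrow> a) F"
proof -
  have "((\<lambda>k. f k - a) \<longlongrightarrow> 0) F"
    by (rule Lim_null_comparison[OF _ assms]) (intro always_eventually allI norm_le_norm1)
  then show ?thesis by (rule LIM_zero_cancel)
qed

lemma tendsto_absD:
  fixes x :: "'a \<Rightarrow> real^'n"
  assumes "(x \<longlongrightarrow> a) F"
  shows "((\<lambda>k. absD Dh Dv (x k)) \<longlongrightarrow> absD Dh Dv a) F"
proof (rule vec_tendstoI)
  fix i
  have "((\<lambda>k. A *v x k) \<longlongrightarrow> A *v a) F" for A :: "real^'n^'n"
    by (rule bounded_linear.tendsto[OF matrix_vector_mul_bounded_linear assms])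
  then show "((\<lambda>k. absD Dh Dv (x k) $ i) \<longlongrightarrow> absD Dh Dv a $ i) F"
    unfolding absD_def by (auto intro!: tendsto_intros)
qed

lemma tendsto_absD_if_norm1_convergent:
  assumes "((\<lambda>k. norm1 (x k - a)) \<longlonglongrightarrow> 0) \<or>
           ((\<lambda>k. norm1 (absD Dh Dv (x k) - absD Dh Dv a)) \<longlonglongrightarrow> 0)"
  shows "(\<lambda>k. absD Dh Dv (x k)) \<longlonglongrightarrow> absD Dh Dv a"
  using assms by (auto dest: norm1_diff_tendsto_0_imp_tendsto intro: tendsto_absD)

lemma tendsto_weight:
  assumes "((\<lambda>k. absD Dh Dv (x k)) \<longlongrightarrow> absD Dh Dv a) F" and "\<eta> > 0"
  shows "((\<lambda>k. weight Dh Dv \<eta> p (x k)) \<longlongrightarrow> weight Dh Dv \<eta> p a) F"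
proof (rule vec_tendstoI)
  fix i
  have "((\<lambda>k. absD Dh Dv (x k) $ i) \<longlongrightarrow> absD Dh Dv a $ i) F"
    by (rule tendsto_vec_nth[OF assms(1)])
  then show "((\<lambda>k. weight Dh Dv \<eta> p (x k) $ i) \<longlongrightarrow> weight Dh Dv \<eta> p a $ i) F"
    unfolding weight_def using \<open>\<eta> > 0\<close>
    by (auto intro!: tendsto_intros simp: add_pos_nonneg)
qed

lemma tendsto_weighted_energy:
  assumes "(W \<longlongrightarrow> W0) F" and "(x \<longlongrightarrow> a) F"
  shows "((\<lambda>k. weighted_energy K Dh Dv lam y (W k) (x k))
           \<longlongrightarrow> weighted_energy K Dh Dv lam y W0 a) F"
proof -
  have "((\<lambda>k. K *v x k) \<longlongrightarrow> K *v a) F"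
    by (rule bounded_linear.tendsto[OF matrix_vector_mul_bounded_linear assms(2)])
  then show ?thesis
    unfolding weighted_energy_def norm1_def
    using assms(1) tendsto_absD[OF assms(2)] by (auto intro!: tendsto_intros)
qed

lemma norm_le_K_plus_sum_absD:
  fixes K :: "real^'n^'m" and Dh Dv :: "real^'n^'n"
  assumes ker: "\<forall>x. K *v x = 0 \<and> Dh *v x = 0 \<and> Dv *v x = 0 \<longrightarrow> x = 0"
  obtains B where "B > 0"
    and "\<And>x. B * norm x \<le> norm (K *v x) + (\<Sum>i\<in>UNIV. absD Dh Dv x $ i)"
proof -
  let ?L = "\<lambda>x. (K *v x, Dh *v x, Dv *v x)"
  have lin: "linear ?L"
    by (intro bounded_linear.linear bounded_linear_Pair matrix_vector_mul_bounded_linear)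
  have "inj ?L"
    unfolding linear_injective_0[OF lin]
  proof (intro allI impI)
    fix x assume "?L x = 0"
    then have "K *v x = 0 \<and> Dh *v x = 0 \<and> Dv *v x = 0"
      by (simp add: prod_eq_iff)
    with ker show "x = 0" by blast
  qed
  then obtain B0 where B0: "B0 > 0" "\<And>x. B0 * norm x \<le> norm (?L x)"
    using linear_inj_bounded_below_pos[OF lin] by blast
  have "(B0 / 2) * norm x \<le> norm (K *v x) + (\<Sum>i\<in>UNIV. absD Dh Dv x $ i)" for x
  proof -
    have "norm (?L x) \<le> norm (K *v x) + (norm (Dh *v x) + norm (Dv *v x))"
      by (rule order_trans[OF norm_Pair_le]) (simp add: norm_Pair_le)
    then show ?thesis
      using B0(2)[of x] norm_le_sum_absD[where Dh = Dh and Dv = Dv and x = x]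
        norm_ge_zero[of "K *v x"] by linarith
  qed
  with B0(1) show ?thesis by (intro that[of "B0 / 2"]) auto
qed

lemma weighted_energy_zero [simp]: "weighted_energy K Dh Dv lam y W 0 = (norm y)\<^sup>2"
  unfolding weighted_energy_def norm1_def by simp

lemma weighted_energy_sublevel_bound:
  assumes lam: "0 < lam" and c: "0 < c" "\<forall>i. c \<le> W $ i"
    and le: "weighted_energy K Dh Dv lam y W x \<le> weighted_energy K Dh Dv lam y W 0"
  shows "norm (K *v x) + (\<Sum>i\<in>UNIV. absD Dh Dv x $ i) \<le> 2 * norm y + (norm y)\<^sup>2 / (lam * c)"
proof -
  let ?S = "\<Sum>i\<in>UNIV. absD Dh Dv x $ i"
  have W_nonneg: "0 \<le> W $ i" for i
    using c by (meson less_imp_le order_trans)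
  have "c * ?S \<le> (\<Sum>i\<in>UNIV. W $ i * absD Dh Dv x $ i)"
    unfolding sum_distrib_left using c(2) by (intro sum_mono mult_right_mono absD_nonneg) auto
  also have "\<dots> = norm1 (\<chi> i. W $ i * absD Dh Dv x $ i)"
    unfolding norm1_def by (simp add: abs_of_nonneg W_nonneg absD_nonneg)
  finally have weighted: "lam * (c * ?S) \<le> lam * norm1 (\<chi> i. W $ i * absD Dh Dv x $ i)"
    using lam by simp
  have "0 \<le> lam * (c * ?S)"
    using lam c by (simp add: sum_nonneg absD_nonneg)
  with le[unfolded weighted_energy_zero, unfolded weighted_energy_def] weighted
  have fit: "(norm (K *v x - y))\<^sup>2 \<le> (norm y)\<^sup>2" and reg: "lam * (c * ?S) \<le> (norm y)\<^sup>2"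
    using zero_le_power2[of "norm (K *v x - y)"] by linarith+
  have "norm (K *v x) \<le> norm (K *v x - y) + norm y"
    using norm_triangle_ineq[of "K *v x - y" y] by simp
  also have "\<dots> \<le> 2 * norm y"
    using fit by simp
  finally have K_bound: "norm (K *v x) \<le> 2 * norm y" .
  have "?S * (lam * c) \<le> (norm y)\<^sup>2"
    using reg by (simp add: mult_ac)
  then have "?S \<le> (norm y)\<^sup>2 / (lam * c)"
    using lam c by (simp add: pos_le_divide_eq)
  with K_bound show ?thesis by linarith
qed

lemma eventually_uniform_lower_bound:
  fixes W :: "'a \<Rightarrow> real^'n"
  assumes "(W \<longlongrightarrow> W0) F" and "\<forall>i. 0 < W0 $ i"
  obtains c where "0 < c" and "\<forall>\<^sub>F k in F. \<forall>i. c \<le> W k $ i"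
proof -
  define c where "c = Min (range (\<lambda>i. W0 $ i)) / 2"
  have Min_pos: "0 < Min (range (\<lambda>i. W0 $ i))"
    and Min_le: "Min (range (\<lambda>i. W0 $ i)) \<le> W0 $ i" for i
    using assms(2) by simp_all
  have "0 < c" and c_less: "c < W0 $ i" for i
    using Min_pos Min_le[of i] unfolding c_def by linarith+
  have "\<forall>\<^sub>F k in F. c < W k $ i" for i
    by (rule order_tendstoD(1)[OF tendsto_vec_nth[OF assms(1)] c_less])
  then have "\<forall>\<^sub>F k in F. \<forall>i. c < W k $ i"
    by (rule eventually_all_finite)
  then have "\<forall>\<^sub>F k in F. \<forall>i. c \<le> W k $ i"
    by (rule eventually_mono) (auto intro: less_imp_le)
  with \<open>0 < c\<close> show ?thesis by (rule that)
qed

lemma weighted_minimizers_bounded: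
  fixes K :: "real^'n^'m" and Dh Dv :: "real^'n^'n" and x W :: "nat \<Rightarrow> real^'n"
  assumes ker: "\<forall>x. K *v x = 0 \<and> Dh *v x = 0 \<and> Dv *v x = 0 \<longrightarrow> x = 0"
    and lam: "0 < lam" and W: "W \<longlonglongrightarrow> W0" "\<forall>i. 0 < W0 $ i"
    and le: "\<And>k. weighted_energy K Dh Dv lam y (W k) (x k) \<le> weighted_energy K Dh Dv lam y (W k) 0"
  shows "Bseq x"
proof -
  obtain c where c: "0 < c" "\<forall>\<^sub>F k in sequentially. \<forall>i. c \<le> W k $ i"
    by (rule eventually_uniform_lower_bound[OF W])
  obtain B where B: "B > 0" "\<And>x. B * norm x \<le> norm (K *v x) + (\<Sum>i\<in>UNIV. absD Dh Dv x $ i)"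
    using norm_le_K_plus_sum_absD[OF ker] by blast
  define M where "M = (2 * norm y + (norm y)\<^sup>2 / (lam * c)) / B"
  have "\<forall>\<^sub>F k in sequentially. norm (x k) \<le> norm M"
    using c(2)
  proof (rule eventually_mono)
    fix k assume "\<forall>i. c \<le> W k $ i"
    then have "B * norm (x k) \<le> 2 * norm y + (norm y)\<^sup>2 / (lam * c)"
      by (rule order_trans[OF B(2) weighted_energy_sublevel_bound[OF lam c(1) _ le]])
    then show "norm (x k) \<le> norm M"
      unfolding M_def using B(1) by (simp add: pos_le_divide_eq mult.commute)
  qed
  then show ?thesis
    by (rule Bseq_eventually_mono) (rule Bfun_const)
qed

lemma limit_of_minimizers_is_minimizer:
  fixes f :: "nat \<Rightarrow> 'a::topological_space \<Rightarrow> real"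
  assumes S: "closed S" and x_in: "\<And>k. x k \<in> S"
    and x_min: "\<And>k z. z \<in> S \<Longrightarrow> f k (x k) \<le> f k z"
    and lim: "x \<longlonglongrightarrow> l"
    and f_lim: "(\<lambda>k. f k (x k)) \<longlonglongrightarrow> g l" "\<And>z. z \<in> S \<Longrightarrow> (\<lambda>k. f k z) \<longlonglongrightarrow> g z"
  shows "l \<in> S" and "\<forall>z\<in>S. g l \<le> g z"
proof -
  show "l \<in> S"
    by (rule closed_sequentially[OF S x_in lim])
  show "\<forall>z\<in>S. g l \<le> g z"
  proof
    fix z assume "z \<in> S"
    show "g l \<le> g z"
      by (rule tendsto_le[OF trivial_limit_sequentially f_lim(2)[OF \<open>z \<in> S\<close>] f_lim(1)])
        (simp add: x_min \<open>z \<in> S\<close>)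
  qed
qed

theorem corollary2:
  fixes K :: "real^'n^'m" and Dh Dv :: "real^'n^'n"
    and lam \<eta> p \<delta> :: real
    and xGT :: "real^'n" and e y :: "real^'m"
    and \<Psi> :: "nat \<Rightarrow> real^'m \<Rightarrow> real^'n"
    and xk :: "nat \<Rightarrow> real^'n" and xgt :: "real^'n"
  assumes mn: "CARD('m) \<le> CARD('n)"
    and lam: "lam > 0" and eta: "\<eta> > 0" and p: "0 < p" "p < 1"
    and GT: "xGT \<in> nonneg_orthant"
    and ker: "\<forall>x. K *v x = 0 \<and> Dh *v x = 0 \<and> Dv *v x = 0 \<longrightarrow> x = 0"
    and delta: "\<delta> \<ge> 0"
    and obs: "y = K *v xGT + e" and noise: "norm e \<le> \<delta>"
    and lip: "\<forall>k. \<exists>L. L-lipschitz_on UNIV (\<Psi> k)"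
    and conv: "((\<lambda>k. norm1 (\<Psi> k y - xGT)) \<longlonglongrightarrow> 0) \<or>
               ((\<lambda>k. norm1 (absD Dh Dv (\<Psi> k y) - absD Dh Dv xGT)) \<longlonglongrightarrow> 0)"
    and minK: "\<forall>k. is_unique_minimizer (Jfun K Dh Dv lam \<eta> p y (\<Psi> k y)) nonneg_orthant (xk k)"
    and minGT: "is_unique_minimizer (Jfun K Dh Dv lam \<eta> p y xGT) nonneg_orthant xgt"
  shows "\<exists>r. strict_mono r \<and> ((xk \<circ> r) \<longlonglongrightarrow> xgt)"
proof -
  define E where "E = weighted_energy K Dh Dv lam y"
  define W where "W k = weight Dh Dv \<eta> p (\<Psi> k y)" for k
  define W0 where "W0 = weight Dh Dv \<eta> p xGT"
  have min: "is_unique_minimizer (E (W k)) nonneg_orthant (xk k)" for k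
    using minK unfolding E_def W_def Jfun_eq_weighted_energy by blast
  have W_lim: "W \<longlonglongrightarrow> W0"
    unfolding W_def W0_def by (rule tendsto_weight[OF tendsto_absD_if_norm1_convergent[OF conv] eta])
  have "Bseq xk"
    using weighted_minimizers_bounded[OF ker lam W_lim] weight_pos[OF eta]
      is_unique_minimizerD(2)[OF min zero_in_nonneg_orthant]
    unfolding W0_def E_def by blast
  then obtain l r where r: "strict_mono r" and lim: "(xk \<circ> r) \<longlonglongrightarrow> l"
    using bounded_imp_convergent_subsequence Bseq_eq_bounded by blast
  have W_r_lim: "(W \<circ> r) \<longlonglongrightarrow> W0"
    by (rule LIMSEQ_subseq_LIMSEQ[OF W_lim r])
  have "l \<in> nonneg_orthant" and "\<forall>z\<in>nonneg_orthant. E W0 l \<le> E W0 z"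
    using closed_nonneg_orthant is_unique_minimizerD(1,2)[OF min] lim
      tendsto_weighted_energy[OF W_r_lim lim] tendsto_weighted_energy[OF W_r_lim tendsto_const]
    unfolding E_def comp_def by (rule limit_of_minimizers_is_minimizer; blast)+
  then have "l = xgt"
    using is_unique_minimizerD(3)[OF minGT] unfolding Jfun_eq_weighted_energy E_def W0_def by blast
  with r lim show ?thesis by blast
qed

end
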